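(* Let $\mathbf x=(k,S,\Lambda,\mathbf a)$ be an abelian group $k$-parameter which is full, i.e. $\Lambda={}^{k+1}({}^\omega S)$ (and $\mathbf a$ is arbitrary). If $U\subseteq{}^\omega S$ and $|U|\ge(|S|+\aleph_0)^{+(k+1)}$ (the $(k+1)$-st successor cardinal of $|S|+\aleph_0$), then $G_U$ is not free.
   Context: For a set $S$, ${}^\omega S$ is the set of all functions $\omega\to S$. An abelian group $k$-parameter is $\mathbf x=(k,S,\Lambda,\mathbf a)$ with $k<\omega$, $S$ a set, $\Lambda\subseteq {}^{k+1}({}^\omega S)$ (sequences $\bar\eta=\langle\eta_0,\dots,\eta_k\rangle$, $\eta_\ell\in{}^\omega S$) and $\mathbf a:\Lambda\times\omega\to\mathbb Z$, $\mathbf a_{\bar\eta,n}=\mathbf a(\bar\eta,n)$. For $\bar\eta\in\Lambda$, $m\le k$, $n<\omega$, $\bar\eta\upharpoonleft\langle m,n\rangle$ is the sequence obtained from $\bar\eta$ by replacing $\eta_m$ with $\eta_m\restriction n$. $\Lambda_m=\{\bar\eta\upharpoonleft\langle m,n\rangle:\bar\eta\in\Lambda,n<\omega\}$, $\Lambda_{\le k}=\bigcup_{m\le k}\Lambda_m$. $G_{\mathbf x}$ is the abelian group generated by $z$, $x_{\bar\nu}$ ($\bar\nu\in\Lambda_{\le k}$), $y_{\bar\eta,n}$ ($\bar\eta\in\Lambda,n<\omega$) freely except for the relations $(n!)y_{\bar\eta,n+1}=y_{\bar\eta,n}+\mathbf a_{\bar\eta,n}z+\sum_{m\le k}x_{\bar\eta\upharpoonleft\langle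 m,n\rangle}$ ($\bar\eta\in\Lambda$, $n<\omega$). For $U\subseteq{}^\omega S$, $G_U$ is the subgroup of $G_{\mathbf x}$ generated by $\{z\}\cup\{y_{\bar\eta,n}:\bar\eta\in\Lambda\cap{}^{k+1}U,n<\omega\}\cup\{x_{\bar\eta\upharpoonleft\langle m,n\rangle}:\bar\eta\in\Lambda\cap{}^{k+1}U,m\le k,n<\omega\}$. *)

theory Defs
  imports "HOL-Algebra.Free_Abelian_Groups" "HOL-Algebra.Coset"
begin

(* An omega-sequence is a function nat => 'a; a finite sequence of length n is an 'a list;
   an entry of nu in Lambda_{<=k} is either finite (Inl) or infinite (Inr);
   a (k+1)-tuple is a list of length k+1. *)
datatype 'a gen = Zg | Xg "('a list + (nat \<Rightarrow> 'a)) list" | Yg "(nat \<Rightarrow> 'a) list" nat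

definition restr :: "(nat \<Rightarrow> 'a) list \<Rightarrow> nat \<Rightarrow> nat \<Rightarrow> ('a list + (nat \<Rightarrow> 'a)) list" where
  "restr eta m n = (map Inr eta)[m := Inl (map (eta ! m) [0..<n])]"

definition full_Lambda :: "nat \<Rightarrow> 'a set \<Rightarrow> (nat \<Rightarrow> 'a) list set" where
  "full_Lambda k S = {eta. length eta = Suc k \<and> (\<forall>i<Suc k. range (eta ! i) \<subseteq> S)}"

definition Lambda_le :: "nat \<Rightarrow> (nat \<Rightarrow> 'a) list set \<Rightarrow> ('a list + (nat \<Rightarrow> 'a)) list set" where
  "Lambda_le k L = {restr eta m n | eta m n. eta \<in> L \<and> m \<le> k}"

definition gens :: "nat \<Rightarrow> (nat \<Rightarrow> 'a) list set \<Rightarrow> 'a gen set" where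
  "gens k L = {Zg} \<union> Xg ` Lambda_le k L \<union> {Yg eta n | eta n. eta \<in> L}"

definition rel :: "nat \<Rightarrow> ((nat \<Rightarrow> 'a) list \<Rightarrow> nat \<Rightarrow> int) \<Rightarrow> (nat \<Rightarrow> 'a) list \<Rightarrow> nat \<Rightarrow> 'a gen \<Rightarrow>\<^sub>0 int" where
  "rel k a eta n =
     Poly_Mapping.single (Yg eta (Suc n)) (int (fact n))
     - Poly_Mapping.single (Yg eta n) 1
     - Poly_Mapping.single Zg (a eta n)
     - (\<Sum>m\<le>k. Poly_Mapping.single (Xg (restr eta m n)) 1)"

definition rels_subgroup :: "nat \<Rightarrow> (nat \<Rightarrow> 'a) list set \<Rightarrow> ((nat \<Rightarrow> 'a) list \<Rightarrow> nat \<Rightarrow> int) \<Rightarrow> ('a gen \<Rightarrow>\<^sub>0 int) set" where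
  "rels_subgroup k L a = generate (free_Abelian_group (gens k L)) {rel k a eta n | eta n. eta \<in> L}"

definition Gx :: "nat \<Rightarrow> (nat \<Rightarrow> 'a) list set \<Rightarrow> ((nat \<Rightarrow> 'a) list \<Rightarrow> nat \<Rightarrow> int) \<Rightarrow> ('a gen \<Rightarrow>\<^sub>0 int) set monoid" where
  "Gx k L a = free_Abelian_group (gens k L) Mod rels_subgroup k L a"

definition gen_elt :: "nat \<Rightarrow> (nat \<Rightarrow> 'a) list set \<Rightarrow> ((nat \<Rightarrow> 'a) list \<Rightarrow> nat \<Rightarrow> int) \<Rightarrow> 'a gen \<Rightarrow> ('a gen \<Rightarrow>\<^sub>0 int) set" where
  "gen_elt k L a g = r_coset (free_Abelian_group (gens k L)) (rels_subgroup k L a) (Poly_Mapping.single g 1)"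

definition gens_U :: "nat \<Rightarrow> (nat \<Rightarrow> 'a) list set \<Rightarrow> (nat \<Rightarrow> 'a) set \<Rightarrow> 'a gen set" where
  "gens_U k L U = {Zg} \<union> {Yg eta n | eta n. eta \<in> L \<and> set eta \<subseteq> U}
      \<union> {Xg (restr eta m n) | eta m n. eta \<in> L \<and> set eta \<subseteq> U \<and> m \<le> k}"

definition GU :: "nat \<Rightarrow> (nat \<Rightarrow> 'a) list set \<Rightarrow> ((nat \<Rightarrow> 'a) list \<Rightarrow> nat \<Rightarrow> int) \<Rightarrow> (nat \<Rightarrow> 'a) set \<Rightarrow> ('a gen \<Rightarrow>\<^sub>0 int) set monoid" where
  "GU k L a U = (Gx k L a)\<lparr>carrier := generate (Gx k L a) (gen_elt k L a ` gens_U k L U)\<rparr>"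

(* a group is free abelian if it is isomorphic to the free abelian group on some set
   (the basis may be taken of the element type, since a basis injects into the carrier) *)
definition free_abelian :: "('g, 'm) monoid_scheme \<Rightarrow> bool" where
  "free_abelian G \<longleftrightarrow> (\<exists>B :: 'g set. G \<cong> free_Abelian_group B)"

fun sucN :: "nat \<Rightarrow> 'b rel \<Rightarrow> 'c set \<Rightarrow> bool" where
  "sucN 0 r B = ordIso2 (card_of B) r"
| "sucN (Suc n) r B = (\<exists>C :: 'c set. sucN n r C \<and> ordIso2 (card_of B) (cardSuc (card_of C)))"

definition sucN_le :: "nat \<Rightarrow> 'b rel \<Rightarrow> 'c set \<Rightarrow> bool" where
  "sucN_le n r U \<longleftrightarrow> (\<exists>B :: 'c set. sucN n r B \<and> ordLeq3 (card_of B) (card_of U))"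

end

theory Submission
  imports Defs
begin

(* If phi is an isomorphism from G_U onto the free Abelian group F(B), then theta, phi composed
   with the quotient map, is a homomorphism from the free Abelian group on the generators of G_U
   onto F(B) whose kernel consists of the relations. Fix a preimage of every basis element b;
   it contains only finitely many generators y_(eta',n), hence involves finitely many sequences.
   Since |U| >= (|S| + aleph_0)^(+(k+1)), a free-set argument yields eta in U^(k+1) such that
   every b in the support C of the images of z and of the x_(eta|<m,n>) has a preimage in which
   some eta_m does not occur: x_(eta|<m,n>) involves only the eta_j with j <> m, and for fixed
   such eta_j there are at most |S| + aleph_0 of these generators.
   The relations for eta give n! theta(y_(eta,n+1)) = theta(y_(eta,n)) + (a vector supported in
   C), so outside C the coefficients of theta(y_(eta,0)) are divisible by every n!, and
   theta(y_(eta,0)) is supported in C. Finally, the additive weight giving y_(eta,n) the value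
   1 / prod_(i<n) i! and all other generators the value 0 vanishes on the relations and on the
   chosen preimages, hence on y_(eta,0), whose weight is 1. *)

section \<open>Free tuples below successor cardinals\<close>

lemma sucN_imp_ordLeq:
  fixes X :: "'c set"
  assumes "sucN n r X"
  shows "r \<le>o |X|"
  using assms
proof (induction n arbitrary: X)
  case 0
  then show ?case by (simp add: ordIso_iff_ordLeq)
next
  case (Suc n)
  then obtain C :: "'c set" where C: "sucN n r C" "|X| =o cardSuc |C|" by auto
  have "r <o cardSuc |C|"
    using Suc.IH[OF C(1)] cardSuc_greater[OF card_of_Card_order] by (rule ordLeq_ordLess_trans)
  then show ?case
    using ordLess_imp_ordLeq[OF ordLess_ordIso_trans[OF _ ordIso_symmetric[OF C(2)]]] by blast
qed

lemma sucN_le_SucE: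
  fixes A :: "'c set"
  assumes "sucN_le (Suc n) r A"
  obtains C :: "'c set" where "sucN n r C" "|C| <o |A|"
proof -
  obtain B :: "'c set" where B: "sucN (Suc n) r B" "|B| \<le>o |A|"
    using assms unfolding sucN_le_def by blast
  then obtain C :: "'c set" where C: "sucN n r C" "|B| =o cardSuc |C|" by auto
  have "|C| <o |B|"
    using cardSuc_greater[OF card_of_Card_order] C(2)
    by (rule ordLess_ordIso_trans[OF _ ordIso_symmetric])
  then have "|C| <o |A|" using B(2) by (rule ordLess_ordLeq_trans)
  with C(1) show thesis by (rule that)
qed

lemma exists_not_mem_if_ordLess:
  assumes "|X| <o |A|"
  obtains a where "a \<in> A" "a \<notin> X"
proof -
  have "\<not> A \<subseteq> X" using assms card_of_mono1 not_ordLess_ordLeq by metis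
  then show thesis using that by blast
qed

lemma card_of_Fpow_closure:
  assumes "infinite B" and "\<And>t. finite t \<Longrightarrow> t \<subseteq> B \<Longrightarrow> |F t| \<le>o |B|"
  shows "|B \<union> (\<Union>t\<in>Fpow B. F t)| \<le>o |B|"
proof -
  have "|\<Union>t\<in>Fpow B. F t| \<le>o |B|"
  proof (rule card_of_UNION_ordLeq_infinite[OF assms(1)])
    show "|Fpow B| \<le>o |B|" using card_of_Fpow_infinite[OF assms(1)] by (rule ordIso_imp_ordLeq)
    show "\<forall>t\<in>Fpow B. |F t| \<le>o |B|" using assms(2) by (simp add: Fpow_def)
  qed
  then show ?thesis
    by (rule card_of_Un_ordLeq_infinite[OF assms(1) card_of_mono1[OF subset_refl]])
qed

definition other_entries :: "'a list \<Rightarrow> nat \<Rightarrow> 'a set" where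
  "other_entries xs m = {xs ! j | j. j < length xs \<and> j \<noteq> m}"

lemma other_entries_Cons_0 [simp]: "other_entries (x # xs) 0 = set xs"
proof (intro equalityI subsetI)
  fix y assume "y \<in> other_entries (x # xs) 0"
  then obtain j where "y = (x # xs) ! j" "j < Suc (length xs)" "j \<noteq> 0"
    unfolding other_entries_def by auto
  then show "y \<in> set xs" by (cases j) auto
next
  fix y assume "y \<in> set xs"
  then obtain i where "i < length xs" "y = (x # xs) ! Suc i" by (auto simp: in_set_conv_nth)
  then show "y \<in> other_entries (x # xs) 0" unfolding other_entries_def by fastforce
qed

lemma other_entries_Cons_Suc [simp]:
  "other_entries (x # xs) (Suc i) = insert x (other_entries xs i)"
  unfolding other_entries_def
  apply auto
  subgoal for j by (cases j) auto
  subgoal by (rule exI[of _ 0]) auto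
  subgoal for j by (rule exI[of _ "Suc j"]) auto
  done

lemma exists_free_point:
  fixes Lam :: "'b set" and A C :: "'c set" and F :: "'c set \<Rightarrow> 'c set"
  assumes "infinite Lam" and "|Lam| \<le>o |C|" and "|C| <o |A|"
    and "\<And>s. finite s \<Longrightarrow> |F s| \<le>o |Lam|"
  obtains B a where "B \<subseteq> A" "|B| =o |C|" "a \<in> A" "a \<notin> B"
    and "\<forall>t\<in>Fpow B. a \<notin> F t"
proof -
  obtain f where f: "inj_on f C" "f ` C \<subseteq> A"
    using assms(3) card_of_ordLeq ordLess_imp_ordLeq by metis
  define B where "B = f ` C"
  have BC: "|B| =o |C|"
    unfolding B_def using f(1) card_of_ordIsoI ordIso_symmetric bij_betw_imageI by metis
  have LamB: "|Lam| \<le>o |B|"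
    using assms(2) BC ordIso_symmetric ordLeq_ordIso_trans by blast
  have "infinite B" using LamB assms(1) card_of_ordLeq_finite by blast
  then have "|B \<union> (\<Union>t\<in>Fpow B. F t)| \<le>o |B|"
    by (rule card_of_Fpow_closure) (use assms(4) LamB ordLeq_transitive in blast)
  then have "|B \<union> (\<Union>t\<in>Fpow B. F t)| <o |A|"
    using BC assms(3) ordLeq_ordIso_trans ordLeq_ordLess_trans by blast
  then obtain a where a: "a \<in> A" "a \<notin> B \<union> (\<Union>t\<in>Fpow B. F t)"
    by (rule exists_not_mem_if_ordLess)
  show thesis
  proof (rule that)
    show "B \<subseteq> A" "|B| =o |C|" "a \<in> A" "a \<notin> B" using f(2) BC a unfolding B_def by auto
    show "\<forall>t\<in>Fpow B. a \<notin> F t" using a(2) by blast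
  qed
qed

lemma exists_free_tuple:
  fixes Lam :: "'b set" and A :: "'c set" and F :: "'c set \<Rightarrow> 'c set"
  assumes "infinite Lam" and "sucN_le (Suc k) ( |Lam| ) A"
    and "\<And>s. finite s \<Longrightarrow> |F s| \<le>o |Lam|"
  shows "\<exists>xs. length xs = Suc k \<and> set xs \<subseteq> A \<and> (\<forall>m<Suc k. xs ! m \<notin> F (other_entries xs m))"
  using assms(2,3)
proof (induction k arbitrary: A F)
  case 0
  obtain C :: "'c set" where "sucN 0 |Lam| C" "|C| <o |A|"
    using "0.prems"(1) by (rule sucN_le_SucE)
  then have "|Lam| <o |A|" using ordIso_ordLess_trans[OF ordIso_symmetric] by simp
  then have "|F {}| <o |A|" using "0.prems"(2)[of "{}"] ordLeq_ordLess_trans by blast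
  then obtain a where "a \<in> A" "a \<notin> F {}" by (rule exists_not_mem_if_ordLess)
  then show ?case by (intro exI[of _ "[a]"]) (simp add: other_entries_def)
next
  case (Suc k)
  obtain C :: "'c set" where C: "sucN (Suc k) |Lam| C" "|C| <o |A|"
    using Suc.prems(1) by (rule sucN_le_SucE)
  obtain B a where B: "B \<subseteq> A" "|B| =o |C|" and a: "a \<in> A" "a \<notin> B"
    and free_a: "\<forall>t\<in>Fpow B. a \<notin> F t"
    by (rule exists_free_point[OF assms(1) sucN_imp_ordLeq[OF C(1)] C(2) Suc.prems(2)])
  \<comment> \<open>a is free over every finite subset of B, so it can be put in front of a tuple
    inside B that is free for the set mapping s \<mapsto> F (insert a s).\<close>
  have "sucN_le (Suc k) ( |Lam| ) B"
    unfolding sucN_le_def using C(1) ordIso_imp_ordLeq[OF ordIso_symmetric[OF B(2)]] by blast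
  moreover have "\<And>s. finite s \<Longrightarrow> |F (insert a s)| \<le>o |Lam|" using Suc.prems(2) by blast
  ultimately obtain ys where ys: "length ys = Suc k" "set ys \<subseteq> B"
    "\<forall>m<Suc k. ys ! m \<notin> F (insert a (other_entries ys m))"
    using Suc.IH[of B "\<lambda>s. F (insert a s)"] by blast
  have "(a # ys) ! m \<notin> F (other_entries (a # ys) m)" if "m < Suc (Suc k)" for m
  proof (cases m)
    case 0
    have "set ys \<in> Fpow B" using ys(2) by (simp add: Fpow_def)
    then show ?thesis using free_a 0 by simp
  next
    case (Suc i)
    then show ?thesis using ys(3) that by simp
  qed
  then show ?case using ys(1,2) a(1) B(1) by (intro exI[of _ "a # ys"]) auto
qed

lemma finite_ordLeq_infinite: "finite A \<Longrightarrow> infinite B \<Longrightarrow> |A| \<le>o |B|"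
  using ordLess_imp_ordLeq[OF finite_ordLess_infinite2] by blast

definition zx_gens :: "'a set \<Rightarrow> (nat \<Rightarrow> 'a) set \<Rightarrow> 'a gen set" where
  "zx_gens S s = insert Zg (Xg ` lists (Inl ` lists S \<union> Inr ` s))"

definition zx_gens_of :: "nat \<Rightarrow> (nat \<Rightarrow> 'a) list \<Rightarrow> 'a gen set" where
  "zx_gens_of k xs = insert Zg {Xg (restr xs m n) | m n. m \<le> k}"

lemma card_of_zx_gens:
  assumes "finite s"
  shows "|zx_gens S s| \<le>o |S <+> (UNIV :: nat set)|"
proof -
  let ?Lam = "S <+> (UNIV :: nat set)"
  have inf: "infinite ?Lam" using finite_PlusD(2) infinite_UNIV_nat by blast
  have lists_Lam: "|lists A| \<le>o |?Lam|" if "|A| \<le>o |?Lam|" for A :: "'b set"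
    using card_of_lists_mono[OF that] ordIso_imp_ordLeq[OF card_of_lists_infinite[OF inf]]
    by (rule ordLeq_transitive)
  have "|Inl ` lists S :: ('a list + (nat \<Rightarrow> 'a)) set| \<le>o |?Lam|"
    using card_of_image lists_Lam[OF card_of_Plus1] by (rule ordLeq_transitive)
  moreover have "|Inr ` s :: ('a list + (nat \<Rightarrow> 'a)) set| \<le>o |?Lam|"
    using finite_imageI[OF assms] inf by (rule finite_ordLeq_infinite)
  ultimately have "|Inl ` lists S \<union> Inr ` s :: ('a list + (nat \<Rightarrow> 'a)) set| \<le>o |?Lam|"
    by (rule card_of_Un_ordLeq_infinite[OF inf])
  then have "|lists (Inl ` lists S \<union> Inr ` s)| \<le>o |?Lam|" by (rule lists_Lam)
  then have "|Xg ` lists (Inl ` lists S \<union> Inr ` s)| \<le>o |?Lam|"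
    by (rule ordLeq_transitive[OF card_of_image])
  moreover have "|{Zg :: 'a gen}| \<le>o |?Lam|" by (rule finite_ordLeq_infinite[OF _ inf]) simp
  ultimately have "|{Zg} \<union> Xg ` lists (Inl ` lists S \<union> Inr ` s)| \<le>o |?Lam|"
    by (rule card_of_Un_ordLeq_infinite[OF inf, rotated])
  then show ?thesis by (simp add: zx_gens_def)
qed

lemma card_of_UN_zx_gens:
  assumes "finite s" and "\<And>g. finite (K g)" and "\<And>b. finite (J b)"
  shows "|\<Union>g\<in>zx_gens S s. \<Union>b\<in>K g. J b| \<le>o |S <+> (UNIV :: nat set)|"
proof -
  have inf: "infinite (S <+> (UNIV :: nat set))" using finite_PlusD(2) infinite_UNIV_nat by blast
  have "|\<Union>g\<in>zx_gens S s. K g| \<le>o |S <+> (UNIV :: nat set)|"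
    by (rule card_of_UNION_ordLeq_infinite[OF inf card_of_zx_gens[OF assms(1)]])
      (simp add: finite_ordLeq_infinite[OF assms(2) inf])
  then have "|\<Union>b\<in>(\<Union>g\<in>zx_gens S s. K g). J b| \<le>o |S <+> (UNIV :: nat set)|"
    by (rule card_of_UNION_ordLeq_infinite[OF inf])
      (simp add: finite_ordLeq_infinite[OF assms(3) inf])
  then show ?thesis by (simp only: UN_UN_flatten)
qed

lemma restr_in_zx_gens:
  assumes "set xs \<subseteq> {eta. range eta \<subseteq> S}" and "m < length xs"
  shows "Xg (restr xs m n) \<in> zx_gens S (other_entries xs m)"
proof -
  have "e \<in> Inl ` lists S \<union> Inr ` other_entries xs m" if e: "e \<in> set (restr xs m n)" for e
  proof -
    obtain j where "j < length (restr xs m n)" "e = restr xs m n ! j"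
      using e unfolding in_set_conv_nth by blast
    then have j: "j < length xs" "e = restr xs m n ! j" by (simp_all add: restr_def)
    show ?thesis
    proof (cases "j = m")
      case True
      have "range (xs ! m) \<subseteq> S" using assms nth_mem by blast
      then have "map (xs ! m) [0..<n] \<in> lists S" by (auto simp: image_subset_iff)
      moreover have "e = Inl (map (xs ! m) [0..<n])" using j True by (simp add: restr_def)
      ultimately show ?thesis by blast
    next
      case False
      then have "xs ! j \<in> other_entries xs m" using j(1) unfolding other_entries_def by blast
      moreover have "e = Inr (xs ! j)" using j False by (simp add: restr_def)
      ultimately show ?thesis by blast
    qed
  qed
  then have "restr xs m n \<in> lists (Inl ` lists S \<union> Inr ` other_entries xs m)"
    by (intro in_listsI ballI)
  then show ?thesis unfolding zx_gens_def by (intro insertI2 imageI)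
qed

lemma exists_tuple_avoiding:
  fixes K :: "'a gen \<Rightarrow> 'b set" and J :: "'b \<Rightarrow> (nat \<Rightarrow> 'a) set"
  assumes "U \<subseteq> {eta. range eta \<subseteq> S}"
    and "sucN_le (Suc k) (BNF_Cardinal_Arithmetic.csum |S| natLeq) U"
    and "\<And>g. finite (K g)" and "\<And>b. finite (J b)"
  obtains xs where "length xs = Suc k" "set xs \<subseteq> U"
    and "\<And>b. b \<in> (\<Union>g\<in>zx_gens_of k xs. K g) \<Longrightarrow> \<not> set xs \<subseteq> J b"
proof -
  define F where "F s = (\<Union>g\<in>zx_gens S s. \<Union>b\<in>K g. J b)" for s
  have "sucN_le (Suc k) ( |S <+> (UNIV :: nat set)| ) U"
    using assms(2) unfolding csum_def Field_card_of Field_natLeq .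
  moreover have "|F s| \<le>o |S <+> (UNIV :: nat set)|" if "finite s" for s
    unfolding F_def using that assms(3,4) by (rule card_of_UN_zx_gens)
  moreover have "infinite (S <+> (UNIV :: nat set))"
    using finite_PlusD(2) infinite_UNIV_nat by blast
  ultimately obtain xs where xs: "length xs = Suc k" "set xs \<subseteq> U"
    and free: "\<forall>m<Suc k. xs ! m \<notin> F (other_entries xs m)"
    using exists_free_tuple by metis
  show thesis
  proof (rule that[OF xs])
    fix b assume "b \<in> (\<Union>g\<in>zx_gens_of k xs. K g)"
    then obtain g where g: "g \<in> zx_gens_of k xs" and b: "b \<in> K g" by blast
    obtain m where m: "m < Suc k" "g \<in> zx_gens S (other_entries xs m)"
    proof (cases "g = Zg")
      case True
      then show thesis using that[of 0] by (simp add: zx_gens_def)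
    next
      case False
      then obtain i n where i: "i \<le> k" "g = Xg (restr xs i n)"
        using g by (auto simp: zx_gens_of_def)
      have "set xs \<subseteq> {eta. range eta \<subseteq> S}" using xs(2) assms(1) by blast
      then have "g \<in> zx_gens S (other_entries xs i)"
        unfolding i(2) by (rule restr_in_zx_gens) (use i(1) xs(1) in linarith)
      moreover have "i < Suc k" using i(1) by simp
      ultimately show thesis by (rule that[rotated])
    qed
    have "J b \<subseteq> F (other_entries xs m)" using b m(2) unfolding F_def by blast
    then have "xs ! m \<notin> J b" using free m(1) by blast
    moreover have "xs ! m \<in> set xs" using m(1) xs(1) by simp
    ultimately show "\<not> set xs \<subseteq> J b" by blast
  qed
qed

section \<open>Homomorphisms between free Abelian groups\<close>

lemma keys_add_subset:
  "Poly_Mapping.keys p \<subseteq> S \<Longrightarrow> Poly_Mapping.keys q \<subseteq> S \<Longrightarrow> Poly_Mapping.keys (p + q) \<subseteq> S"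
  using keys_add[of p q] by blast

lemma keys_diff_subset:
  "Poly_Mapping.keys p \<subseteq> S \<Longrightarrow> Poly_Mapping.keys q \<subseteq> S \<Longrightarrow> Poly_Mapping.keys (p - q) \<subseteq> S"
  using keys_diff[of p q] by blast

lemma keys_single_subset: "g \<in> S \<Longrightarrow> Poly_Mapping.keys (Poly_Mapping.single g c) \<subseteq> S"
  by (simp add: keys_single)

lemma frag_cmul_frag_of: "frag_cmul c (frag_of g) = Poly_Mapping.single g c"
  by (rule poly_mapping_eqI) (simp add: lookup_single)

lemma hom_frag_cmul:
  assumes "\<theta> \<in> hom (free_Abelian_group A) (free_Abelian_group B)" and "Poly_Mapping.keys p \<subseteq> A"
  shows "\<theta> (frag_cmul c p) = frag_cmul c (\<theta> p)"
proof -
  have "Poly_Mapping.keys (\<theta> p) \<subseteq> B" using hom_in_carrier[OF assms(1)] assms(2) by simp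
  moreover have "\<theta> (p [^]\<^bsub>free_Abelian_group A\<^esub> c) = \<theta> p [^]\<^bsub>free_Abelian_group B\<^esub> c"
    using assms by (intro hom_int_pow) simp_all
  ultimately show ?thesis using assms(2) by simp
qed

lemma keys_hom_free_Abelian_group:
  assumes "\<theta> \<in> hom (free_Abelian_group A) (free_Abelian_group B)" and "Poly_Mapping.keys p \<subseteq> A"
  shows "Poly_Mapping.keys (\<theta> p) \<subseteq> (\<Union>g\<in>Poly_Mapping.keys p. Poly_Mapping.keys (\<theta> (frag_of g)))"
    (is "_ \<subseteq> ?X")
proof -
  have "Poly_Mapping.keys q \<subseteq> A \<and> Poly_Mapping.keys (\<theta> q) \<subseteq> ?X"
    if "Poly_Mapping.keys q \<subseteq> Poly_Mapping.keys p" for q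
    using that
  proof (induction q rule: frag_induction)
    case zero
    have "\<theta> 0 = 0" using hom_frag_diff[OF assms(1), of 0 0] by simp
    then show ?case by simp
  next
    case (one g)
    then show ?case using assms(2) by (auto simp: keys_single)
  next
    case (diff q1 q2)
    then have "\<theta> (q1 - q2) = \<theta> q1 - \<theta> q2" by (intro hom_frag_diff[OF assms(1)]) auto
    with diff show ?case by (simp add: keys_diff_subset)
  qed
  then show ?thesis by blast
qed

lemma subgroup_free_Abelian_group_keys:
  fixes A S :: "'a set"
  assumes "A \<subseteq> S"
  shows "subgroup {p. Poly_Mapping.keys p \<subseteq> A} (free_Abelian_group S)"
proof
  show "{p. Poly_Mapping.keys p \<subseteq> A} \<subseteq> carrier (free_Abelian_group S)" using assms by auto
  show "\<one>\<^bsub>free_Abelian_group S\<^esub> \<in> {p. Poly_Mapping.keys p \<subseteq> A}" by simp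
next
  fix x y :: "'a \<Rightarrow>\<^sub>0 int"
  assume "x \<in> {p. Poly_Mapping.keys p \<subseteq> A}" "y \<in> {p. Poly_Mapping.keys p \<subseteq> A}"
  then show "x \<otimes>\<^bsub>free_Abelian_group S\<^esub> y \<in> {p. Poly_Mapping.keys p \<subseteq> A}"
    by (simp add: keys_add_subset)
next
  fix x :: "'a \<Rightarrow>\<^sub>0 int"
  assume "x \<in> {p. Poly_Mapping.keys p \<subseteq> A}"
  then show "inv\<^bsub>free_Abelian_group S\<^esub> x \<in> {p. Poly_Mapping.keys p \<subseteq> A}" using assms by auto
qed

lemma carrier_subgroup_generated_frag_of:
  assumes "A \<subseteq> S"
  shows "carrier (subgroup_generated (free_Abelian_group S) (frag_of ` A))
    = {p. Poly_Mapping.keys p \<subseteq> A}"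
    (is "carrier ?H = ?P")
proof
  interpret F: group "free_Abelian_group S" by simp
  show "carrier ?H \<subseteq> ?P"
    using subgroup_free_Abelian_group_keys[OF assms]
    by (rule F.subgroup_generated_minimal) (auto simp: keys_single)
  interpret H: subgroup "carrier ?H" "free_Abelian_group S"
    by (rule F.subgroup_subgroup_generated)
  show "?P \<subseteq> carrier ?H"
  proof
    fix p assume "p \<in> ?P"
    then have "Poly_Mapping.keys p \<subseteq> A" by simp
    then show "p \<in> carrier ?H"
    proof (induction p rule: frag_induction)
      case zero
      show ?case using H.one_closed by simp
    next
      case (one g)
      have "frag_of ` A \<subseteq> carrier (free_Abelian_group S)" using assms by auto
      then have "frag_of ` A \<subseteq> carrier ?H" by (rule F.subgroup_generated_subset_carrier_subset)
      then show ?case using one by blast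
    next
      case (diff x y)
      then have "x \<otimes>\<^bsub>free_Abelian_group S\<^esub> inv\<^bsub>free_Abelian_group S\<^esub> y \<in> carrier ?H"
        by (intro H.m_closed H.m_inv_closed)
      moreover have "y \<in> carrier (free_Abelian_group S)" using diff(2) by (rule H.mem_carrier)
      ultimately show ?case by simp
    qed
  qed
qed

lemma additive_eq_0_if_image_supported:
  fixes \<psi> :: "('a \<Rightarrow>\<^sub>0 int) \<Rightarrow> 'c :: ab_group_add"
  assumes \<theta>: "\<theta> \<in> hom (free_Abelian_group A) (free_Abelian_group B)"
    and \<psi>_diff: "\<And>p q. \<psi> (p - q) = \<psi> p - \<psi> q"
    and \<psi>_ker: "\<And>p. Poly_Mapping.keys p \<subseteq> A \<Longrightarrow> \<theta> p = 0 \<Longrightarrow> \<psi> p = 0"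
    and lift: "\<And>b. b \<in> C \<Longrightarrow> \<exists>q. Poly_Mapping.keys q \<subseteq> A \<and> \<theta> q = frag_of b \<and> \<psi> q = 0"
    and p: "Poly_Mapping.keys p \<subseteq> A" "Poly_Mapping.keys (\<theta> p) \<subseteq> C"
  shows "\<psi> p = 0"
proof -
  have "\<exists>q. Poly_Mapping.keys q \<subseteq> A \<and> \<theta> q = v \<and> \<psi> q = 0" if "Poly_Mapping.keys v \<subseteq> C" for v
    using that
  proof (induction v rule: frag_induction)
    case zero
    have "\<theta> 0 = 0" using hom_frag_diff[OF \<theta>, of 0 0] by simp
    moreover have "\<psi> 0 = 0" using \<psi>_diff[of 0 0] by simp
    ultimately show ?case by (intro exI[of _ 0]) simp
  next
    case (one b)
    then show ?case by (rule lift)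
  next
    case (diff v1 v2)
    then obtain q1 q2 where "Poly_Mapping.keys q1 \<subseteq> A" "\<theta> q1 = v1" "\<psi> q1 = 0"
      "Poly_Mapping.keys q2 \<subseteq> A" "\<theta> q2 = v2" "\<psi> q2 = 0" by blast
    then show ?case
      using hom_frag_diff[OF \<theta>, of q1 q2] \<psi>_diff[of q1 q2]
      by (intro exI[of _ "q1 - q2"]) (simp add: keys_diff_subset)
  qed
  then obtain q where q: "Poly_Mapping.keys q \<subseteq> A" "\<theta> q = \<theta> p" "\<psi> q = 0" using p(2) by blast
  have "\<theta> (p - q) = 0" using hom_frag_diff[OF \<theta> p(1) q(1)] q(2) by simp
  then have "\<psi> (p - q) = 0" using \<psi>_ker keys_diff_subset[OF p(1) q(1)] by blast
  then show ?thesis using \<psi>_diff q(3) by simp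
qed

lemma prod_fact_ge: "int n \<le> (\<Prod>i<Suc n. fact i)"
proof -
  have "(1 :: int) \<le> (\<Prod>i<n. fact i)" by (rule prod_ge_1) simp
  then have "fact n \<le> (\<Prod>i<n. fact i) * (fact n :: int)"
    using mult_right_mono[of 1 "\<Prod>i<n. fact i" "fact n :: int"] by simp
  moreover have "int n \<le> fact n" by (metis fact_ge_self of_nat_fact of_nat_le_iff)
  ultimately have "int n \<le> (\<Prod>i<n. fact i) * fact n" by (rule order.trans[rotated])
  then show ?thesis by simp
qed

lemma eq_0_if_fact_recursion:
  fixes c :: "nat \<Rightarrow> int"
  assumes "\<And>n. c n = fact n * c (Suc n)"
  shows "c 0 = 0"
proof (rule ccontr)
  assume "c 0 \<noteq> 0"
  have c0: "c 0 = (\<Prod>i<n. fact i) * c n" for n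
  proof (induction n)
    case (Suc n)
    then show ?case using assms[of n] by (simp add: mult.assoc)
  qed simp
  define n where "n = Suc (nat \<bar>c 0\<bar>)"
  have "(\<Prod>i<Suc n. fact i) dvd c 0" using c0[of "Suc n"] by simp
  then have "\<bar>\<Prod>i<Suc n. fact i\<bar> \<le> \<bar>c 0\<bar>" by (rule dvd_imp_le_int[OF \<open>c 0 \<noteq> 0\<close>])
  moreover have "int n \<le> (\<Prod>i<Suc n. fact i)" by (rule prod_fact_ge)
  ultimately show False unfolding n_def by linarith
qed

lemma keys_subset_if_fact_recursion:
  assumes "\<And>n. frag_cmul (fact n) (v (Suc n)) = v n + u n"
    and "\<And>n. Poly_Mapping.keys (u n) \<subseteq> C"
  shows "Poly_Mapping.keys (v 0) \<subseteq> C"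
proof
  fix b assume b: "b \<in> Poly_Mapping.keys (v 0)"
  show "b \<in> C"
  proof (rule ccontr)
    assume "b \<notin> C"
    then have "Poly_Mapping.lookup (u n) b = 0" for n
      using assms(2) by (meson in_keys_iff subsetD)
    then have "Poly_Mapping.lookup (v n) b = fact n * Poly_Mapping.lookup (v (Suc n)) b" for n
      using arg_cong[OF assms(1)[of n], of "\<lambda>p. Poly_Mapping.lookup p b"]
      by (simp add: lookup_add)
    then have "Poly_Mapping.lookup (v 0) b = 0" by (rule eq_0_if_fact_recursion)
    with b show False by (simp add: in_keys_iff)
  qed
qed

section \<open>Free presentations of G_U\<close>

abbreviation Gx_proj :: "nat \<Rightarrow> (nat \<Rightarrow> 'a) list set \<Rightarrow> ((nat \<Rightarrow> 'a) list \<Rightarrow> nat \<Rightarrow> int)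
    \<Rightarrow> ('a gen \<Rightarrow>\<^sub>0 int) \<Rightarrow> ('a gen \<Rightarrow>\<^sub>0 int) set"
  where "Gx_proj k L a \<equiv> r_coset (free_Abelian_group (gens k L)) (rels_subgroup k L a)"

lemma restr_in_Lambda_le: "eta \<in> L \<Longrightarrow> m \<le> k \<Longrightarrow> restr eta m n \<in> Lambda_le k L"
  unfolding Lambda_le_def by blast

lemma keys_rel_subset:
  assumes "eta \<in> L"
  shows "Poly_Mapping.keys (rel k a eta n) \<subseteq> gens k L"
proof -
  have "Yg eta i \<in> gens k L" for i using assms unfolding gens_def by blast
  moreover have "Zg \<in> gens k L" unfolding gens_def by blast
  moreover have "Xg (restr eta m n) \<in> gens k L" if "m \<le> k" for m
    using restr_in_Lambda_le[OF assms that] unfolding gens_def by blast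
  ultimately show ?thesis
    unfolding rel_def
    using sum_closed_free_Abelian_group[of "{..k}" "\<lambda>m. frag_of (Xg (restr eta m n))" "gens k L"]
    by (intro keys_diff_subset keys_single_subset) auto
qed

lemma subgroup_rels_subgroup: "subgroup (rels_subgroup k L a) (free_Abelian_group (gens k L))"
  unfolding rels_subgroup_def
  by (rule group.generate_is_subgroup[OF group_free_Abelian_group]) (auto dest: keys_rel_subset)

lemma normal_rels_subgroup: "rels_subgroup k L a \<lhd> free_Abelian_group (gens k L)"
  by (rule comm_group.subgroup_imp_normal[OF abelian_free_Abelian_group subgroup_rels_subgroup])

lemma group_Gx: "group (Gx k L a)"
  unfolding Gx_def by (rule normal.factorgroup_is_group[OF normal_rels_subgroup])

lemma Gx_proj_hom: "Gx_proj k L a \<in> hom (free_Abelian_group (gens k L)) (Gx k L a)"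
  unfolding Gx_def by (rule normal.r_coset_hom_Mod[OF normal_rels_subgroup])

lemma Gx_proj_eq_one_iff:
  assumes "Poly_Mapping.keys p \<subseteq> gens k L"
  shows "Gx_proj k L a p = \<one>\<^bsub>Gx k L a\<^esub> \<longleftrightarrow> p \<in> rels_subgroup k L a"
proof -
  have "p \<in> Gx_proj k L a p"
    using assms by (intro group.rcos_self subgroup_rels_subgroup) simp_all
  moreover have "Gx_proj k L a p = rels_subgroup k L a" if "p \<in> rels_subgroup k L a"
    using that by (rule subgroup.rcos_const[OF subgroup_rels_subgroup group_free_Abelian_group])
  ultimately show ?thesis unfolding Gx_def by auto
qed

lemma gens_U_subset: "gens_U k L U \<subseteq> gens k L"
  unfolding gens_U_def gens_def Lambda_le_def by blast

lemma gen_elt_eq: "gen_elt k L a = Gx_proj k L a \<circ> frag_of"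
  by (simp add: fun_eq_iff gen_elt_def)

lemma GU_eq_subgroup_generated:
  "GU k L a U = subgroup_generated (Gx k L a) (gen_elt k L a ` gens_U k L U)"
proof -
  have "gen_elt k L a g \<in> carrier (Gx k L a)" if "g \<in> gens k L" for g
    unfolding gen_elt_def by (rule hom_in_carrier[OF Gx_proj_hom]) (simp add: keys_single that)
  then have "gen_elt k L a ` gens_U k L U \<subseteq> carrier (Gx k L a)"
    using gens_U_subset by blast
  then show ?thesis by (simp only: GU_def subgroup_generated_def Int_absorb1)
qed

lemma carrier_GU: "carrier (GU k L a U) = Gx_proj k L a ` {p. Poly_Mapping.keys p \<subseteq> gens_U k L U}"
proof -
  interpret group_hom "free_Abelian_group (gens k L)" "Gx k L a" "Gx_proj k L a"
    by (simp add: group_hom_def group_hom_axioms_def group_Gx Gx_proj_hom)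
  have "frag_of ` gens_U k L U \<subseteq> carrier (free_Abelian_group (gens k L))"
    using gens_U_subset[of k L U] by auto
  then have "carrier (subgroup_generated (Gx k L a) (Gx_proj k L a ` frag_of ` gens_U k L U))
      = Gx_proj k L a `
        carrier (subgroup_generated (free_Abelian_group (gens k L)) (frag_of ` gens_U k L U))"
    by (rule subgroup_generated_by_image)
  moreover have "gen_elt k L a ` gens_U k L U = Gx_proj k L a ` frag_of ` gens_U k L U"
    by (simp add: gen_elt_eq image_comp)
  ultimately show ?thesis
    by (simp add: GU_eq_subgroup_generated carrier_subgroup_generated_frag_of[OF gens_U_subset])
qed

lemma free_GU_presentation:
  assumes "\<phi> \<in> iso (GU k L a U) (free_Abelian_group B)"
  shows "\<phi> \<circ> Gx_proj k L a \<in> hom (free_Abelian_group (gens_U k L U)) (free_Abelian_group B)"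
    and "\<And>p. Poly_Mapping.keys p \<subseteq> gens_U k L U \<Longrightarrow>
           (\<phi> \<circ> Gx_proj k L a) p = 0 \<longleftrightarrow> p \<in> rels_subgroup k L a"
    and "\<And>b. b \<in> B \<Longrightarrow> \<exists>p. Poly_Mapping.keys p \<subseteq> gens_U k L U \<and> (\<phi> \<circ> Gx_proj k L a) p = frag_of b"
proof -
  interpret \<phi>: group_hom "GU k L a U" "free_Abelian_group B" \<phi>
    using assms group.group_subgroup_generated[OF group_Gx]
    by (simp add: group_hom_def group_hom_axioms_def GU_eq_subgroup_generated iso_def)
  have proj_hom: "Gx_proj k L a \<in> hom (free_Abelian_group (gens_U k L U)) (GU k L a U)"
  proof (rule homI)
    fix p assume "p \<in> carrier (free_Abelian_group (gens_U k L U))"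
    then show "Gx_proj k L a p \<in> carrier (GU k L a U)" by (simp add: carrier_GU)
  next
    fix p q assume "p \<in> carrier (free_Abelian_group (gens_U k L U))"
      "q \<in> carrier (free_Abelian_group (gens_U k L U))"
    then have "p \<in> carrier (free_Abelian_group (gens k L))"
      and "q \<in> carrier (free_Abelian_group (gens k L))"
      using gens_U_subset[of k L U] by auto
    then show "Gx_proj k L a (p \<otimes>\<^bsub>free_Abelian_group (gens_U k L U)\<^esub> q)
        = Gx_proj k L a p \<otimes>\<^bsub>GU k L a U\<^esub> Gx_proj k L a q"
      using hom_mult[OF Gx_proj_hom] by (simp add: GU_def)
  qed
  then show "\<phi> \<circ> Gx_proj k L a \<in> hom (free_Abelian_group (gens_U k L U)) (free_Abelian_group B)"
    using \<phi>.homh by (rule hom_compose)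
  have inj: "inj_on \<phi> (carrier (GU k L a U))"
    and surj: "\<phi> ` carrier (GU k L a U) = carrier (free_Abelian_group B)"
    using assms by (auto simp: iso_def bij_betw_def)
  show "(\<phi> \<circ> Gx_proj k L a) p = 0 \<longleftrightarrow> p \<in> rels_subgroup k L a"
    if p: "Poly_Mapping.keys p \<subseteq> gens_U k L U" for p
  proof -
    have "Gx_proj k L a p \<in> carrier (GU k L a U)" using p by (auto simp: carrier_GU)
    then have "\<phi> (Gx_proj k L a p) = 0 \<longleftrightarrow> Gx_proj k L a p = \<one>\<^bsub>GU k L a U\<^esub>"
      using inj_onD[OF inj _ _ \<phi>.G.one_closed] \<phi>.hom_one by auto
    moreover have "Gx_proj k L a p = \<one>\<^bsub>GU k L a U\<^esub> \<longleftrightarrow> p \<in> rels_subgroup k L a"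
      using Gx_proj_eq_one_iff[of p] p gens_U_subset[of k L U] by (simp add: GU_def)
    ultimately show ?thesis by simp
  qed
  show "\<exists>p. Poly_Mapping.keys p \<subseteq> gens_U k L U \<and> (\<phi> \<circ> Gx_proj k L a) p = frag_of b"
    if "b \<in> B" for b
  proof -
    have "frag_of b \<in> \<phi> ` carrier (GU k L a U)" using surj that by simp
    then show ?thesis by (auto simp: carrier_GU)
  qed
qed

lemma tuple_in_full_Lambda:
  assumes "length xs = Suc k" and "set xs \<subseteq> U" and "U \<subseteq> {eta. range eta \<subseteq> S}"
  shows "xs \<in> full_Lambda k S"
proof -
  have "range (xs ! i) \<subseteq> S" if "i < Suc k" for i
  proof -
    have "xs ! i \<in> U" using nth_mem[of i xs] assms(1,2) that by auto
    then show ?thesis using assms(3) by blast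
  qed
  then show ?thesis unfolding full_Lambda_def using assms(1) by simp
qed

lemma zx_gens_of_subset:
  assumes "xs \<in> L" and "set xs \<subseteq> U"
  shows "zx_gens_of k xs \<subseteq> gens_U k L U"
  using assms unfolding zx_gens_of_def gens_U_def by blast

lemma Yg_in_gens_U:
  assumes "xs \<in> L" and "set xs \<subseteq> U"
  shows "Yg xs n \<in> gens_U k L U"
  using assms unfolding gens_U_def by blast

lemma keys_image_Yg_0_subset:
  assumes \<theta>: "\<theta> \<in> hom (free_Abelian_group (gens_U k L U)) (free_Abelian_group B)"
    and ker: "\<And>p. Poly_Mapping.keys p \<subseteq> gens_U k L U \<Longrightarrow> \<theta> p = 0 \<longleftrightarrow> p \<in> rels_subgroup k L a"
    and xs: "xs \<in> L" "set xs \<subseteq> U"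
  shows "Poly_Mapping.keys (\<theta> (frag_of (Yg xs 0)))
    \<subseteq> (\<Union>g\<in>zx_gens_of k xs. Poly_Mapping.keys (\<theta> (frag_of g)))"
proof -
  define q where "q n = Poly_Mapping.single Zg (a xs n) + (\<Sum>m\<le>k. frag_of (Xg (restr xs m n)))" for n
  have Y: "Poly_Mapping.keys (frag_of (Yg xs n)) \<subseteq> gens_U k L U" for n
    using Yg_in_gens_U[OF xs] by simp
  have zx_q: "Poly_Mapping.keys (q n) \<subseteq> zx_gens_of k xs" for n
  proof -
    have "Poly_Mapping.keys (\<Sum>m\<le>k. frag_of (Xg (restr xs m n)))
        \<subseteq> (\<Union>m\<le>k. Poly_Mapping.keys (frag_of (Xg (restr xs m n))))"
      by (rule keys_sum)
    also have "\<dots> \<subseteq> zx_gens_of k xs" unfolding zx_gens_of_def by (auto simp: keys_single)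
    finally have "Poly_Mapping.keys (\<Sum>m\<le>k. frag_of (Xg (restr xs m n))) \<subseteq> zx_gens_of k xs" .
    moreover have "Zg \<in> zx_gens_of k xs" by (simp add: zx_gens_of_def)
    ultimately show ?thesis unfolding q_def by (intro keys_add_subset keys_single_subset)
  qed
  then have q: "Poly_Mapping.keys (q n) \<subseteq> gens_U k L U" for n
    using zx_gens_of_subset[OF xs] by blast
  have rel: "rel k a xs n
      = frag_cmul (fact n) (frag_of (Yg xs (Suc n))) - frag_of (Yg xs n) - q n" for n
    unfolding rel_def q_def frag_cmul_frag_of by (simp add: algebra_simps)
  have "frag_cmul (fact n) (\<theta> (frag_of (Yg xs (Suc n)))) = \<theta> (frag_of (Yg xs n)) + \<theta> (q n)" for n
  proof -
    have cmul: "Poly_Mapping.keys (frag_cmul (fact n) (frag_of (Yg xs (Suc n)))) \<subseteq> gens_U k L U"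
      using keys_cmul Y by (rule order.trans)
    have "Poly_Mapping.keys (rel k a xs n) \<subseteq> gens_U k L U"
      unfolding rel by (intro keys_diff_subset cmul Y q)
    moreover have "rel k a xs n \<in> rels_subgroup k L a"
      unfolding rels_subgroup_def using xs(1) by (blast intro: generate.incl)
    ultimately have "\<theta> (rel k a xs n) = 0" by (simp add: ker)
    moreover have "\<theta> (rel k a xs n)
        = frag_cmul (fact n) (\<theta> (frag_of (Yg xs (Suc n)))) - \<theta> (frag_of (Yg xs n)) - \<theta> (q n)"
      unfolding rel hom_frag_diff[OF \<theta> keys_diff_subset[OF cmul Y] q]
        hom_frag_diff[OF \<theta> cmul Y] hom_frag_cmul[OF \<theta> Y] ..
    ultimately show ?thesis by (simp add: algebra_simps)
  qed
  moreover have "Poly_Mapping.keys (\<theta> (q n))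
      \<subseteq> (\<Union>g\<in>zx_gens_of k xs. Poly_Mapping.keys (\<theta> (frag_of g)))" for n
    using keys_hom_free_Abelian_group[OF \<theta> q[of n]] zx_q[of n] by blast
  ultimately show ?thesis by (rule keys_subset_if_fact_recursion)
qed

section \<open>Weights of generators\<close>

definition frag_weight :: "('a \<Rightarrow> 'b :: comm_ring_1) \<Rightarrow> ('a \<Rightarrow>\<^sub>0 int) \<Rightarrow> 'b" where
  "frag_weight w p = (\<Sum>g\<in>Poly_Mapping.keys p. of_int (Poly_Mapping.lookup p g) * w g)"

lemma frag_weight_add: "frag_weight w (p + q) = frag_weight w p + frag_weight w q"
  unfolding frag_weight_def by (rule setsum_keys_plus_distrib) (simp_all add: distrib_right)

lemma frag_weight_zero [simp]: "frag_weight w 0 = 0"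
  by (simp add: frag_weight_def)

lemma frag_weight_uminus: "frag_weight w (- p) = - frag_weight w p"
  using frag_weight_add[of w "- p" p] by (simp add: eq_neg_iff_add_eq_0)

lemma frag_weight_diff: "frag_weight w (p - q) = frag_weight w p - frag_weight w q"
  using frag_weight_add[of w p "- q"] frag_weight_uminus[of w q] by simp

lemma frag_weight_single: "frag_weight w (Poly_Mapping.single g c) = of_int c * w g"
  by (simp add: frag_weight_def keys_single)

lemma frag_weight_sum: "frag_weight w (\<Sum>i\<in>I. f i) = (\<Sum>i\<in>I. frag_weight w (f i))"
  by (induction I rule: infinite_finite_induct) (simp_all add: frag_weight_add)

lemma frag_weight_eq_0: "(\<And>g. g \<in> Poly_Mapping.keys p \<Longrightarrow> w g = 0) \<Longrightarrow> frag_weight w p = 0"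
  by (simp add: frag_weight_def)

(* Chosen so that n! * w(y_(eta,n+1)) = w(y_(eta,n)): every relation gets weight 0. *)
definition Yg_weight :: "(nat \<Rightarrow> 'a) list \<Rightarrow> 'a gen \<Rightarrow> rat" where
  "Yg_weight xs g =
     (case g of Yg eta n \<Rightarrow> if eta = xs then 1 / of_nat (\<Prod>i<n. fact i) else 0 | _ \<Rightarrow> 0)"

fun Yg_entries :: "'a gen \<Rightarrow> (nat \<Rightarrow> 'a) set" where
  "Yg_entries (Yg eta n) = set eta"
| "Yg_entries Zg = {}"
| "Yg_entries (Xg nu) = {}"

lemma finite_Yg_entries: "finite (Yg_entries g)"
  by (cases g) simp_all

lemma frag_weight_rel: "frag_weight (Yg_weight xs) (rel k a eta n) = 0"
proof (cases "eta = xs")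
  case True
  have "(\<Prod>i<n. fact i :: nat) \<noteq> 0" by (simp add: prod_zero_iff)
  then show ?thesis
    using True
    by (simp add: rel_def frag_weight_diff frag_weight_single frag_weight_sum Yg_weight_def)
next
  case False
  then show ?thesis
    by (simp add: rel_def frag_weight_diff frag_weight_single frag_weight_sum Yg_weight_def)
qed

lemma frag_weight_rels_subgroup:
  assumes "p \<in> rels_subgroup k L a"
  shows "frag_weight (Yg_weight xs) p = 0"
  using assms unfolding rels_subgroup_def
proof (induction rule: generate.induct)
  case (inv h)
  then obtain eta n where h: "h = rel k a eta n" "eta \<in> L" by blast
  then have "inv\<^bsub>free_Abelian_group (gens k L)\<^esub> h = - h"
    using keys_rel_subset[OF h(2)] by simp
  then show ?case using h(1) by (simp add: frag_weight_uminus frag_weight_rel)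
qed (auto simp: frag_weight_add frag_weight_rel)

lemma frag_weight_Yg_eq_0:
  assumes "\<not> set xs \<subseteq> (\<Union>g\<in>Poly_Mapping.keys p. Yg_entries g)"
  shows "frag_weight (Yg_weight xs) p = 0"
proof (rule frag_weight_eq_0)
  fix g assume "g \<in> Poly_Mapping.keys p"
  then show "Yg_weight xs g = 0" using assms by (cases g) (auto simp: Yg_weight_def)
qed

lemma keys_image_Yg_0_not_subset:
  assumes \<theta>: "\<theta> \<in> hom (free_Abelian_group (gens_U k L U)) (free_Abelian_group B)"
    and ker: "\<And>p. Poly_Mapping.keys p \<subseteq> gens_U k L U \<Longrightarrow> \<theta> p = 0 \<longleftrightarrow> p \<in> rels_subgroup k L a"
    and xs: "xs \<in> L" "set xs \<subseteq> U"
    and pre: "\<And>b. b \<in> B \<Longrightarrow> Poly_Mapping.keys (pre b) \<subseteq> gens_U k L U \<and> \<theta> (pre b) = frag_of b"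
    and avoid: "\<And>b. b \<in> C \<Longrightarrow> \<not> set xs \<subseteq> (\<Union>h\<in>Poly_Mapping.keys (pre b). Yg_entries h)"
  shows "\<not> Poly_Mapping.keys (\<theta> (frag_of (Yg xs 0))) \<subseteq> C"
proof
  have Y0: "Yg xs 0 \<in> gens_U k L U" using xs by (rule Yg_in_gens_U)
  assume "Poly_Mapping.keys (\<theta> (frag_of (Yg xs 0))) \<subseteq> C"
  moreover have "Poly_Mapping.keys (\<theta> (frag_of (Yg xs 0))) \<subseteq> B"
    using hom_in_carrier[OF \<theta>, of "frag_of (Yg xs 0)"] Y0 by simp
  ultimately have supp: "Poly_Mapping.keys (\<theta> (frag_of (Yg xs 0))) \<subseteq> C \<inter> B"
    by (rule Int_greatest)
  have "frag_weight (Yg_weight xs) (frag_of (Yg xs 0)) = 0"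
  proof (rule additive_eq_0_if_image_supported
      [OF \<theta> frag_weight_diff _ _ keys_single_subset[OF Y0] supp])
    show "frag_weight (Yg_weight xs) p = 0"
      if "Poly_Mapping.keys p \<subseteq> gens_U k L U" "\<theta> p = 0" for p
      using that by (simp add: ker frag_weight_rels_subgroup)
    show "\<exists>q. Poly_Mapping.keys q \<subseteq> gens_U k L U \<and> \<theta> q = frag_of b
        \<and> frag_weight (Yg_weight xs) q = 0" if b: "b \<in> C \<inter> B" for b
      using pre[of b] frag_weight_Yg_eq_0[OF avoid[of b]] b by (intro exI[of _ "pre b"]) simp
  qed
  then show False by (simp add: frag_weight_single Yg_weight_def)
qed

theorem claim1p14:
  fixes k :: nat and S :: "'a set" and a :: "(nat \<Rightarrow> 'a) list \<Rightarrow> nat \<Rightarrow> int"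
    and U :: "(nat \<Rightarrow> 'a) set"
  assumes "U \<subseteq> {eta. range eta \<subseteq> S}"
    and "sucN_le (Suc k) (BNF_Cardinal_Arithmetic.csum (card_of S) natLeq) U"
  shows "\<not> free_abelian (GU k (full_Lambda k S) a U)"
proof
  define L where "L = full_Lambda k S"
  assume "free_abelian (GU k (full_Lambda k S) a U)"
  then obtain B :: "('a gen \<Rightarrow>\<^sub>0 int) set set" and \<phi>
    where "\<phi> \<in> iso (GU k L a U) (free_Abelian_group B)"
    unfolding free_abelian_def is_iso_def L_def by blast
  define \<theta> where "\<theta> = \<phi> \<circ> Gx_proj k L a"
  note presentation = free_GU_presentation[OF \<open>\<phi> \<in> _\<close>, folded \<theta>_def]
  obtain pre where pre: "\<And>b. b \<in> B
      \<Longrightarrow> Poly_Mapping.keys (pre b) \<subseteq> gens_U k L U \<and> \<theta> (pre b) = frag_of b"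
    using presentation(3) by metis
  define C where "C xs = (\<Union>g\<in>zx_gens_of k xs. Poly_Mapping.keys (\<theta> (frag_of g)))" for xs
  obtain xs where xs: "length xs = Suc k" "set xs \<subseteq> U"
    and avoid: "\<And>b. b \<in> C xs \<Longrightarrow> \<not> set xs \<subseteq> (\<Union>h\<in>Poly_Mapping.keys (pre b). Yg_entries h)"
    unfolding C_def
    by (rule exists_tuple_avoiding[OF assms, where K = "\<lambda>g. Poly_Mapping.keys (\<theta> (frag_of g))"
          and J = "\<lambda>b. \<Union>h\<in>Poly_Mapping.keys (pre b). Yg_entries h"])
      (simp_all add: finite_Yg_entries)
  have "xs \<in> L" unfolding L_def using xs assms(1) by (rule tuple_in_full_Lambda)
  have "Poly_Mapping.keys (\<theta> (frag_of (Yg xs 0))) \<subseteq> C xs"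
    unfolding C_def by (rule keys_image_Yg_0_subset[OF presentation(1,2) \<open>xs \<in> L\<close> xs(2)])
  moreover have "\<not> Poly_Mapping.keys (\<theta> (frag_of (Yg xs 0))) \<subseteq> C xs"
    by (rule keys_image_Yg_0_not_subset[OF presentation(1,2) \<open>xs \<in> L\<close> xs(2) pre avoid])
  ultimately show False by (rule notE[rotated])
qed

end
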